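(* Let $\zeta$ be a uniform binary substitution that is not primitive. Then for every $y\in X_\zeta$, every $m,\ell\in\mathbb N$ and every $\varepsilon>0$, \[ C_\ell(y^{(m)},\infty,\varepsilon)=\mathrm{RR}_\ell(y^{(m)},\infty,\varepsilon)=\mathrm{DET}_\ell(y^{(m)},\infty,\varepsilon)=1 \quad\text{and}\quad \mathrm{L}_\ell(y^{(m)},\infty,\varepsilon)=\infty . \]
   Context: Alphabet $A=\{0,1\}$, $\Sigma=A^{\mathbb N_0}$ with metric $\rho(y,z)=2^{-\min\{i\ge0:\,y_i\ne z_i\}}$ ($y\ne z$), $\rho(y,y)=0$, shift $\sigma$. A uniform binary substitution is a map $\zeta:A\to A^*$ with $|\zeta(0)|=|\zeta(1)|=q\ge2$, extended to words by concatenation; $\mathcal L_\zeta$ is the set of subwords of words $\zeta^k(a)$, $a\in A,k\ge1$; $X_\zeta=\{y\in\Sigma:y_0\dots y_{n-1}\in\mathcal L_\zeta\ \forall n\}$. $\zeta$ is primitive if for some $k\ge1$ each letter occurs in $\zeta^k(a)$ for every $a$. Recurrence notions for a sequence $z$ (over a finite alphabet, with the analogous metric and shift): recurrence plot $R(z,n,\varepsilon)$, $n\ge2$, is the $n\times n$ matrix ($0\le i,j<n$) with entry $1$ iff $\rho(\sigma^iz,\sigma^jz)\le\varepsilon$. A line of length $\ell$ is $(i,j,\ell)$ with $0\le i,j\le n-\ell$, $i\ne j$, entries $(i+k,j+k)=1$ for $0\le k<\ell$, entry $(i-1,j-1)=0$ if $\min\{i,j\}>0$, entry $(i+\ell,j+\ell)=0$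 if $\max\{i,j\}<n-\ell$. For finite $n$: $N_\ell$ = number of lines of length exactly $\ell$, $\lambda_\ell=N_\ell/(n^2-n)$, $\Lambda_\ell=\sum_{l\ge\ell}\lambda_l$, $\mathrm{RR}_\ell=\sum_{l\ge\ell}l\lambda_l$, $\mathrm{DET}_\ell=\mathrm{RR}_\ell/\mathrm{RR}_1$, $\mathrm{L}_\ell=\mathrm{RR}_\ell/\Lambda_\ell$ (average line length). Correlation sum $C_\ell(z,n,\varepsilon)=n^{-2}\#\{(i,j)\in[0,n)^2:\max_{0\le k<\ell}\rho(\sigma^{i+k}z,\sigma^{j+k}z)\le\varepsilon\}$. Values at $(z,\infty,\varepsilon)$ are the limits as $n\to\infty$ (for $\mathrm{L}_\ell$, the value $\infty$ means the quantity tends to $+\infty$, equivalently $\mathrm{L}_\ell=\ell+C_{\ell+1}/(C_\ell-C_{\ell+1})$ at $n=\infty$ with zero denominator). Embedding: $y^{(m)}$ is the sequence over $A^m$ with $j$-th letter $y_j\dots y_{j+m-1}$. *)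

theory Defs
  imports Complex_Main
begin

text \<open>Alphabet A = {0,1} is encoded as bool (0 = False, 1 = True).
  Sequences are functions nat \<Rightarrow> 'a.\<close>

definition shift :: "nat \<Rightarrow> (nat \<Rightarrow> 'a) \<Rightarrow> (nat \<Rightarrow> 'a)" where
  "shift i z = (\<lambda>k. z (i + k))"

definition rho :: "(nat \<Rightarrow> 'a) \<Rightarrow> (nat \<Rightarrow> 'a) \<Rightarrow> real" where
  "rho y z = (if y = z then 0 else (1/2) ^ (LEAST i. y i \<noteq> z i))"

definition subst_word :: "(bool \<Rightarrow> bool list) \<Rightarrow> bool list \<Rightarrow> bool list" where
  "subst_word \<zeta> w = concat (map \<zeta> w)"

definition is_factor :: "'a list \<Rightarrow> 'a list \<Rightarrow> bool" where
  "is_factor u w \<longleftrightarrow> (\<exists>p s. w = p @ u @ s)"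

definition subst_lang :: "(bool \<Rightarrow> bool list) \<Rightarrow> bool list set" where
  "subst_lang \<zeta> = {u. \<exists>a k. k \<ge> 1 \<and> is_factor u ((subst_word \<zeta> ^^ k) [a])}"

definition subst_shift :: "(bool \<Rightarrow> bool list) \<Rightarrow> (nat \<Rightarrow> bool) set" where
  "subst_shift \<zeta> = {y. \<forall>n. map y [0..<n] \<in> subst_lang \<zeta>}"

definition primitive :: "(bool \<Rightarrow> bool list) \<Rightarrow> bool" where
  "primitive \<zeta> \<longleftrightarrow> (\<exists>k\<ge>1. \<forall>a b. b \<in> set ((subst_word \<zeta> ^^ k) [a]))"

definition embed :: "nat \<Rightarrow> (nat \<Rightarrow> 'a) \<Rightarrow> (nat \<Rightarrow> 'a list)" where
  "embed m y = (\<lambda>j. map (\<lambda>k. y (j + k)) [0..<m])"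

definition rp :: "(nat \<Rightarrow> 'a) \<Rightarrow> real \<Rightarrow> nat \<Rightarrow> nat \<Rightarrow> bool" where
  "rp z \<epsilon> i j \<longleftrightarrow> rho (shift i z) (shift j z) \<le> \<epsilon>"

definition is_line :: "(nat \<Rightarrow> 'a) \<Rightarrow> nat \<Rightarrow> real \<Rightarrow> nat \<Rightarrow> nat \<Rightarrow> nat \<Rightarrow> bool" where
  "is_line z n \<epsilon> i j l \<longleftrightarrow>
     l \<le> n \<and> i \<le> n - l \<and> j \<le> n - l \<and> i \<noteq> j \<and>
     (\<forall>k<l. rp z \<epsilon> (i + k) (j + k)) \<and>
     (min i j > 0 \<longrightarrow> \<not> rp z \<epsilon> (i - 1) (j - 1)) \<and>
     (max i j < n - l \<longrightarrow> \<not> rp z \<epsilon> (i + l) (j + l))"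

definition num_lines :: "(nat \<Rightarrow> 'a) \<Rightarrow> nat \<Rightarrow> real \<Rightarrow> nat \<Rightarrow> nat" where
  "num_lines z n \<epsilon> l = card {(i, j). i < n \<and> j < n \<and> is_line z n \<epsilon> i j l}"

definition lam :: "(nat \<Rightarrow> 'a) \<Rightarrow> nat \<Rightarrow> real \<Rightarrow> nat \<Rightarrow> real" where
  "lam z n \<epsilon> l = real (num_lines z n \<epsilon> l) / (real n ^ 2 - real n)"

text \<open>Lines have length at most n, so sums over l \<ge> ell are sums over ell..n.\<close>

definition Lam :: "(nat \<Rightarrow> 'a) \<Rightarrow> nat \<Rightarrow> real \<Rightarrow> nat \<Rightarrow> real" where
  "Lam z n \<epsilon> ell = (\<Sum>l\<in>{ell..n}. lam z n \<epsilon> l)"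

definition RR :: "(nat \<Rightarrow> 'a) \<Rightarrow> nat \<Rightarrow> real \<Rightarrow> nat \<Rightarrow> real" where
  "RR z n \<epsilon> ell = (\<Sum>l\<in>{ell..n}. real l * lam z n \<epsilon> l)"

definition DET :: "(nat \<Rightarrow> 'a) \<Rightarrow> nat \<Rightarrow> real \<Rightarrow> nat \<Rightarrow> real" where
  "DET z n \<epsilon> ell = RR z n \<epsilon> ell / RR z n \<epsilon> 1"

definition avgL :: "(nat \<Rightarrow> 'a) \<Rightarrow> nat \<Rightarrow> real \<Rightarrow> nat \<Rightarrow> real" where
  "avgL z n \<epsilon> ell = RR z n \<epsilon> ell / Lam z n \<epsilon> ell"

definition corr_sum :: "(nat \<Rightarrow> 'a) \<Rightarrow> nat \<Rightarrow> real \<Rightarrow> nat \<Rightarrow> real" where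
  "corr_sum z n \<epsilon> ell = real (card {(i, j). i < n \<and> j < n \<and>
      (\<forall>k<ell. rho (shift (i + k) z) (shift (j + k) z) \<le> \<epsilon>)}) / real n ^ 2"

end

theory Submission
  imports Defs
begin

text \<open>A non-primitive uniform binary substitution either maps both letters to constant words, and
  then every \<open>y \<in> X\<^sub>\<zeta>\<close> is constant, or it fixes a letter, \<open>\<zeta>(c) = c\<^sup>q\<close>, while \<open>c\<close> occurs in
  \<open>\<zeta>(\<not> c)\<close>. In the second case a letter other than \<open>c\<close> at position \<open>p\<close> of \<open>\<zeta>\<^sup>k(a)\<close> forces every
  base-\<open>q\<close> digit of \<open>p\<close> into the set \<open>D\<close> of positions of non-\<open>c\<close> letters in \<open>\<zeta>(\<not> c)\<close>, a proper
  subset of \<open>{0..<q}\<close>; so the letters other than \<open>c\<close> in \<open>y\<close> have density at most \<open>(|D|/q)\<^sup>j\<close> for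
  every \<open>j\<close>, i.e. density zero. Hence almost every position starts a long block of \<open>c\<close>'s, and any
  two such positions are \<open>\<epsilon>\<close>-recurrent along \<open>ell\<close> consecutive steps of the embedded sequence.

  The recurrence quantities then follow from the combinatorics of the recurrence plot alone: lines
  are pairwise disjoint and every recurrent diagonal segment of length \<open>ell\<close> lies on a line of
  length at least \<open>ell\<close>, so almost all entries lie on such lines and the correlation sum, the
  recurrence rate and the determinism tend to 1; but a line can only start next to a position
  outside the good set, so there are \<open>o(n\<^sup>2)\<close> lines and their average length diverges.\<close>

section \<open>Sets of natural density zero\<close>

definition zero_density :: "nat set \<Rightarrow> bool" where
  "zero_density S \<longleftrightarrow> (\<lambda>n. real (card ({..<n} \<inter> S)) / real n) \<longlonglongrightarrow> 0"

lemma zero_density_empty: "zero_density {}"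
  by (simp add: zero_density_def)

lemma zero_density_Un:
  assumes "zero_density S" "zero_density T"
  shows "zero_density (S \<union> T)"
  unfolding zero_density_def
proof (rule tendsto_sandwich[OF _ _ tendsto_const])
  have "card ({..<n} \<inter> (S \<union> T)) \<le> card ({..<n} \<inter> S) + card ({..<n} \<inter> T)" for n
    by (metis Int_Un_distrib card_Un_le)
  then have "real (card ({..<n} \<inter> (S \<union> T))) \<le> real (card ({..<n} \<inter> S)) + real (card ({..<n} \<inter> T))" for n
    by (metis of_nat_add of_nat_le_iff)
  then show "\<forall>\<^sub>F n in sequentially. real (card ({..<n} \<inter> (S \<union> T))) / real n
          \<le> real (card ({..<n} \<inter> S)) / real n + real (card ({..<n} \<inter> T)) / real n"
    by (simp add: divide_right_mono flip: add_divide_distrib)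
  show "(\<lambda>n. real (card ({..<n} \<inter> S)) / real n + real (card ({..<n} \<inter> T)) / real n) \<longlonglongrightarrow> 0"
    using tendsto_add[OF assms[unfolded zero_density_def]] by simp
qed simp

lemma zero_density_UN:
  assumes "finite I" "\<And>k. k \<in> I \<Longrightarrow> zero_density (S k)"
  shows "zero_density (\<Union>k\<in>I. S k)"
  using assms by (induction I rule: finite_induct) (auto intro: zero_density_empty zero_density_Un)

lemma zero_density_shift:
  assumes "zero_density S"
  shows "zero_density {i. i + k \<in> S}"
  unfolding zero_density_def
proof (rule tendsto_sandwich[OF _ _ tendsto_const])
  have "card ({..<n} \<inter> {i. i + k \<in> S}) \<le> card ({..<n} \<inter> S) + k" for n
  proof -
    have "(\<lambda>i. i + k) ` ({..<n} \<inter> {i. i + k \<in> S}) \<subseteq> ({..<n} \<inter> S) \<union> {n..<n + k}"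
      by auto
    then have "card ((\<lambda>i. i + k) ` ({..<n} \<inter> {i. i + k \<in> S})) \<le> card (({..<n} \<inter> S) \<union> {n..<n + k})"
      by (intro card_mono) auto
    also have "\<dots> \<le> card ({..<n} \<inter> S) + k"
      using card_Un_le[of "{..<n} \<inter> S" "{n..<n + k}"] by simp
    finally show ?thesis by (simp add: card_image)
  qed
  then have "real (card ({..<n} \<inter> {i. i + k \<in> S})) \<le> real (card ({..<n} \<inter> S)) + real k" for n
    by (metis of_nat_add of_nat_le_iff)
  then show "\<forall>\<^sub>F n in sequentially. real (card ({..<n} \<inter> {i. i + k \<in> S})) / real n
          \<le> real (card ({..<n} \<inter> S)) / real n + real k / real n"
    by (simp add: divide_right_mono flip: add_divide_distrib)
  show "(\<lambda>n. real (card ({..<n} \<inter> S)) / real n + real k / real n) \<longlonglongrightarrow> 0"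
    using tendsto_add[OF assms[unfolded zero_density_def] lim_const_over_n] by simp
qed simp

text \<open>The bound gives density at most \<open>(d/q)\<^sup>j + O(1/n)\<close> for every \<open>j\<close>.\<close>

lemma zero_density_if_block_bound:
  assumes "d < q" and bound: "\<And>j n. q ^ j \<le> n \<Longrightarrow> card ({..<n} \<inter> S) \<le> (n div q ^ j + 2) * d ^ j"
  shows "zero_density S"
  unfolding zero_density_def
proof (rule order_tendstoI)
  fix a :: real
  assume "a < 0"
  then show "\<forall>\<^sub>F n in sequentially. a < real (card ({..<n} \<inter> S)) / real n"
    by (intro always_eventually allI) (simp add: less_le_trans[OF _ divide_nonneg_nonneg])
next
  fix r :: real
  assume "0 < r"
  have "real d / real q < 1"
    using \<open>d < q\<close> by simp
  then obtain j where j: "(real d / real q) ^ j < r / 2"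
    using real_arch_pow_inv[of "r / 2"] \<open>0 < r\<close> by auto
  have "\<forall>\<^sub>F n in sequentially. 2 * real d ^ j / real n < r / 2"
    using order_tendstoD(2)[OF lim_const_over_n[of "2 * real d ^ j"], of "r / 2"] \<open>0 < r\<close> by simp
  then show "\<forall>\<^sub>F n in sequentially. real (card ({..<n} \<inter> S)) / real n < r"
    using eventually_ge_at_top[of "q ^ j"] eventually_gt_at_top[of 0]
  proof eventually_elim
    case (elim n)
    have "0 < q"
      using \<open>d < q\<close> by simp
    have "n div q ^ j * q ^ j \<le> n"
      by (rule div_times_less_eq_dividend)
    then have "real (n div q ^ j) * real q ^ j \<le> real n"
      by (simp only: of_nat_le_iff flip: of_nat_mult of_nat_power)
    then have div_le: "real (n div q ^ j) \<le> real n / real q ^ j"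
      using \<open>0 < q\<close> by (simp add: pos_le_divide_eq)
    have "real (card ({..<n} \<inter> S)) \<le> real ((n div q ^ j + 2) * d ^ j)"
      using bound[OF elim(2)] by (simp only: of_nat_le_iff)
    also have "\<dots> = (real (n div q ^ j) + 2) * real d ^ j"
      by (simp add: algebra_simps)
    also have "\<dots> \<le> (real n / real q ^ j + 2) * real d ^ j"
      using div_le by (intro mult_right_mono) simp_all
    finally have "real (card ({..<n} \<inter> S)) / real n \<le> (real n / real q ^ j + 2) * real d ^ j / real n"
      by (rule divide_right_mono) simp
    also have "\<dots> = (real d / real q) ^ j + 2 * real d ^ j / real n"
      using elim(3) \<open>0 < q\<close> by (simp add: field_simps power_divide)
    finally show ?case
      using j elim(1) by linarith
  qed
qed

lemma card_lessThan_Int_Compl: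
  "card ({..<n} \<inter> G) + card ({..<n} \<inter> - G) = n"
  by (subst card_Un_disjoint[symmetric]) (auto simp: Int_Un_distrib[symmetric])

lemma card_lessThan_Int_le_diff:
  "card ({..<n} \<inter> G) \<le> card ({..<n - k} \<inter> G) + k"
proof -
  have "{..<n} \<inter> G \<subseteq> ({..<n - k} \<inter> G) \<union> {n - k..<n}"
    by auto
  then have "card ({..<n} \<inter> G) \<le> card (({..<n - k} \<inter> G) \<union> {n - k..<n})"
    by (intro card_mono) auto
  also have "\<dots> \<le> card ({..<n - k} \<inter> G) + k"
    using card_Un_le[of "{..<n - k} \<inter> G" "{n - k..<n}"] by simp
  finally show ?thesis .
qed

lemma density_tendsto_1_if_zero_density_Compl:
  assumes "zero_density (- G)"
  shows "(\<lambda>n. real (card ({..<n - k} \<inter> G)) / real n) \<longlonglongrightarrow> 1"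
proof (rule tendsto_sandwich)
  let ?bad = "\<lambda>n. real (card ({..<n} \<inter> - G)) / real n"
  show "\<forall>\<^sub>F n in sequentially. 1 - ?bad n - real k / real n \<le> real (card ({..<n - k} \<inter> G)) / real n"
    using eventually_gt_at_top[of 0]
  proof eventually_elim
    case (elim n)
    have "real n \<le> real (card ({..<n - k} \<inter> G)) + real k + real (card ({..<n} \<inter> - G))"
      using card_lessThan_Int_le_diff[of n G k] card_lessThan_Int_Compl[of n G] by linarith
    then have "(real n - real (card ({..<n} \<inter> - G)) - real k) / real n
        \<le> real (card ({..<n - k} \<inter> G)) / real n"
      by (intro divide_right_mono) simp_all
    with elim show ?case
      by (simp add: diff_divide_distrib)
  qed
  show "\<forall>\<^sub>F n in sequentially. real (card ({..<n - k} \<inter> G)) / real n \<le> 1"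
  proof (intro always_eventually allI)
    fix n
    have "card ({..<n - k} \<inter> G) \<le> n"
      using card_mono[of "{..<n - k}" "{..<n - k} \<inter> G"] by simp
    then show "real (card ({..<n - k} \<inter> G)) / real n \<le> 1"
      by (cases "n = 0") simp_all
  qed
  show "(\<lambda>n. 1 - ?bad n - real k / real n) \<longlonglongrightarrow> 1"
    using tendsto_diff[OF tendsto_diff[OF tendsto_const assms[unfolded zero_density_def]]
        lim_const_over_n[of "real k"]] by simp
qed simp

section \<open>Lines of a recurrence plot\<close>

definition lines :: "(nat \<Rightarrow> 'a) \<Rightarrow> nat \<Rightarrow> real \<Rightarrow> nat \<Rightarrow> (nat \<times> nat) set" where
  "lines z n e l = {(i, j). i < n \<and> j < n \<and> is_line z n e i j l}"

lemma finite_lines [simp]: "finite (lines z n e l)"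
  by (rule finite_subset[of _ "{..<n} \<times> {..<n}"]) (auto simp: lines_def)

lemma is_line_length_unique:
  assumes "is_line z n e i j l" "is_line z n e i j l'"
  shows "l = l'"
proof -
  have "\<not> l < l'" if "is_line z n e i j l" "is_line z n e i j l'" for l l'
  proof
    assume "l < l'"
    with that have "max i j < n - l" "rp z e (i + l) (j + l)"
      by (auto simp: is_line_def)
    with that(1) show False
      by (simp add: is_line_def)
  qed
  with assms show ?thesis
    by (meson linorder_neqE_nat)
qed

lemma is_line_start_not_inside:
  assumes "is_line z n e i j l" "is_line z n e i' j' l'" "k < l"
    "i + k = i' + k'" "j + k = j' + k'" "i < i'"
  shows False
proof -
  have "0 < i'" "0 < j'"
    using assms(4-6) by auto
  then have "\<not> rp z e (i' - 1) (j' - 1)"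
    using assms(2) by (simp add: is_line_def)
  moreover have "i' - 1 - i < l"
    using assms(3,4,6) by linarith
  then have "rp z e (i + (i' - 1 - i)) (j + (i' - 1 - i))"
    using assms(1) unfolding is_line_def by blast
  moreover have "i + (i' - 1 - i) = i' - 1" "j + (i' - 1 - i) = j' - 1"
    using assms(4-6) by linarith+
  ultimately show False
    by simp
qed

lemma is_line_disjoint:
  assumes "is_line z n e i j l" "is_line z n e i' j' l'" "k < l" "k' < l'"
    "i + k = i' + k'" "j + k = j' + k'"
  shows "i = i' \<and> j = j' \<and> l = l' \<and> k = k'"
proof -
  have "i = i'"
    using is_line_start_not_inside[OF assms(1-3,5,6)] is_line_start_not_inside[OF assms(2,1,4)] assms(5,6)
    by (metis linorder_neqE_nat)
  moreover from this have "k = k'" "j = j'"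
    using assms(5,6) by simp_all
  ultimately show ?thesis
    using is_line_length_unique assms(1,2) by blast
qed

lemma obtain_maximal_run:
  fixes Q :: "nat \<Rightarrow> bool"
  assumes "\<forall>k<a. Q k" "a \<le> u"
  obtains b where "a \<le> b" "b \<le> u" "\<forall>k<b. Q k" "b < u \<Longrightarrow> \<not> Q b"
proof -
  have "\<exists>b. (b \<le> u \<and> (\<forall>k<b. Q k)) \<and> (\<forall>c. c \<le> u \<and> (\<forall>k<c. Q k) \<longrightarrow> c \<le> b)"
    by (rule Nat.ex_has_greatest_nat[where k = a and b = u]) (use assms in simp_all)
  then obtain b where b: "b \<le> u" "\<forall>k<b. Q k"
    and greatest: "\<And>c. c \<le> u \<Longrightarrow> \<forall>k<c. Q k \<Longrightarrow> c \<le> b"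
    by blast
  show thesis
  proof
    show "a \<le> b" using greatest assms by blast
    show "b \<le> u" "\<forall>k<b. Q k" using b by simp_all
    show "\<not> Q b" if "b < u"
    proof
      assume "Q b"
      with b(2) have "\<forall>k<Suc b. Q k" using less_Suc_eq by blast
      with greatest[of "Suc b"] that show False by simp
    qed
  qed
qed

lemma is_line_of_maximal_runs:
  assumes "p \<noteq> r" "b \<le> min p r" "p + f \<le> n" "r + f \<le> n"
    and before: "\<forall>k<b. rp z e (p - 1 - k) (r - 1 - k)"
    and before_max: "b < min p r \<Longrightarrow> \<not> rp z e (p - 1 - b) (r - 1 - b)"
    and after: "\<forall>k<f. rp z e (p + k) (r + k)"
    and after_max: "f < n - max p r \<Longrightarrow> \<not> rp z e (p + f) (r + f)"
  shows "is_line z n e (p - b) (r - b) (b + f)"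
  unfolding is_line_def
proof (intro conjI allI impI)
  show "b + f \<le> n" "p - b \<le> n - (b + f)" "r - b \<le> n - (b + f)" "p - b \<noteq> r - b"
    using assms(1-4) by auto
next
  fix k
  assume "k < b + f"
  show "rp z e (p - b + k) (r - b + k)"
  proof (cases "k < b")
    case True
    then have "b - 1 - k < b"
      by simp
    with before have "rp z e (p - 1 - (b - 1 - k)) (r - 1 - (b - 1 - k))"
      by blast
    moreover have "p - 1 - (b - 1 - k) = p - b + k" "r - 1 - (b - 1 - k) = r - b + k"
      using True assms(2) by auto
    ultimately show ?thesis
      by simp
  next
    case False
    with \<open>k < b + f\<close> have "k - b < f"
      by simp
    with after have "rp z e (p + (k - b)) (r + (k - b))"
      by blast
    moreover have "p + (k - b) = p - b + k" "r + (k - b) = r - b + k"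
      using False assms(2) by auto
    ultimately show ?thesis
      by simp
  qed
next
  assume "0 < min (p - b) (r - b)"
  then show "\<not> rp z e (p - b - 1) (r - b - 1)"
    using before_max by (simp add: diff_commute)
next
  assume "max (p - b) (r - b) < n - (b + f)"
  then have "f < n - max p r"
    using assms(2) by auto
  then show "\<not> rp z e (p - b + (b + f)) (r - b + (b + f))"
    using after_max assms(2) by simp
qed

text \<open>A recurrent diagonal segment extends backwards and forwards to maximal runs of recurrences,
  which together form a line.\<close>

lemma is_line_through_segment:
  assumes "0 < ell" "p \<noteq> r" "p + ell \<le> n" "r + ell \<le> n"
    and rec: "\<forall>k<ell. rp z e (p + k) (r + k)"
  obtains l i j k where "ell \<le> l" "k < l" "is_line z n e i j l" "i + k = p" "j + k = r"
proof -
  have "ell \<le> n - max p r"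
    using assms(3,4) by linarith
  then obtain f where f: "ell \<le> f" "f \<le> n - max p r" "\<forall>k<f. rp z e (p + k) (r + k)"
    and f_max: "f < n - max p r \<Longrightarrow> \<not> rp z e (p + f) (r + f)"
    using obtain_maximal_run[of ell "\<lambda>k. rp z e (p + k) (r + k)" "n - max p r"] rec
    by blast
  obtain b where b: "b \<le> min p r" "\<forall>k<b. rp z e (p - 1 - k) (r - 1 - k)"
    and b_max: "b < min p r \<Longrightarrow> \<not> rp z e (p - 1 - b) (r - 1 - b)"
    using obtain_maximal_run[of 0 "\<lambda>k. rp z e (p - 1 - k) (r - 1 - k)" "min p r"] by auto
  have "p + f \<le> n" "r + f \<le> n"
    using f(2) \<open>ell \<le> n - max p r\<close> assms(3,4) by linarith+
  then have "is_line z n e (p - b) (r - b) (b + f)"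
    using is_line_of_maximal_runs[OF assms(2) b(1) _ _ b(2) b_max f(3) f_max] by blast
  then show thesis
    using that[of "b + f" b "p - b" "r - b"] b(1) f(1) assms(1) by simp
qed

text \<open>The points of all lines of length at least \<open>ell\<close>, each recorded as (length, start, offset).\<close>

definition line_points :: "(nat \<Rightarrow> 'a) \<Rightarrow> nat \<Rightarrow> real \<Rightarrow> nat \<Rightarrow> (nat \<times> (nat \<times> nat) \<times> nat) set" where
  "line_points z n e ell = (SIGMA l:{ell..n}. lines z n e l \<times> {..<l})"

lemma finite_line_points [simp]: "finite (line_points z n e ell)"
  by (simp add: line_points_def)

lemma card_line_points:
  "card (line_points z n e ell) = (\<Sum>l\<in>{ell..n}. l * card (lines z n e l))"
  unfolding line_points_def
  by (subst card_SigmaI) (auto simp: card_cartesian_product mult.commute)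

lemma inj_on_line_points:
  "inj_on (\<lambda>(l, (i, j), k). (i + k, j + k)) (line_points z n e ell)"
  by (rule inj_onI) (clarsimp simp: line_points_def lines_def, metis is_line_disjoint)

lemma sum_length_lines_le:
  "(\<Sum>l\<in>{ell..n}. l * card (lines z n e l)) \<le> n * n - n"
proof -
  let ?pt = "\<lambda>(l, (i, j), k). (i + k, j + k)"
  have "?pt ` line_points z n e ell \<subseteq> {..<n} \<times> {..<n} - (\<lambda>p. (p, p)) ` {..<n}"
    by (auto simp: line_points_def lines_def is_line_def)
  then have "card (line_points z n e ell) \<le> card ({..<n} \<times> {..<n} - (\<lambda>p. (p, p)) ` {..<n})"
    using card_mono[OF _ \<open>?pt ` _ \<subseteq> _\<close>] by (simp add: card_image inj_on_line_points)
  also have "\<dots> = n * n - n"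
    by (subst card_Diff_subset) (auto simp: card_image inj_on_def)
  finally show ?thesis
    by (simp add: card_line_points)
qed

lemma card_recurrent_segments_le:
  assumes "0 < ell"
  shows "card {(p, r). p \<noteq> r \<and> p + ell \<le> n \<and> r + ell \<le> n \<and> (\<forall>k<ell. rp z e (p + k) (r + k))}
    \<le> (\<Sum>l\<in>{ell..n}. l * card (lines z n e l))"
proof -
  let ?pt = "\<lambda>(l, (i, j), k). (i + k, j + k)"
  have "{(p, r). p \<noteq> r \<and> p + ell \<le> n \<and> r + ell \<le> n \<and> (\<forall>k<ell. rp z e (p + k) (r + k))}
      \<subseteq> ?pt ` line_points z n e ell"
  proof clarify
    fix p r
    assume "p \<noteq> r" "p + ell \<le> n" "r + ell \<le> n" "\<forall>k<ell. rp z e (p + k) (r + k)"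
    then obtain l i j k where "ell \<le> l" "k < l" "is_line z n e i j l" "i + k = p" "j + k = r"
      using is_line_through_segment assms by metis
    then have "(l, (i, j), k) \<in> line_points z n e ell" "?pt (l, (i, j), k) = (p, r)"
      by (auto simp: line_points_def lines_def is_line_def)
    then show "(p, r) \<in> ?pt ` line_points z n e ell"
      by force
  qed
  then have "card {(p, r). p \<noteq> r \<and> p + ell \<le> n \<and> r + ell \<le> n \<and> (\<forall>k<ell. rp z e (p + k) (r + k))}
      \<le> card (?pt ` line_points z n e ell)"
    by (intro card_mono) auto
  also have "\<dots> \<le> card (line_points z n e ell)"
    by (rule card_image_le) simp
  finally show ?thesis
    by (simp add: card_line_points)
qed

lemma sum_card_lines_le:
  "(\<Sum>l\<in>{ell..n}. card (lines z n e l))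
     \<le> card {(i, j). i < n \<and> j < n \<and> (min i j = 0 \<or> \<not> rp z e (i - 1) (j - 1))}"
proof -
  have "(\<Sum>l\<in>{ell..n}. card (lines z n e l)) = card (SIGMA l:{ell..n}. lines z n e l)"
    by (simp add: card_SigmaI)
  also have "\<dots> \<le> card {(i, j). i < n \<and> j < n \<and> (min i j = 0 \<or> \<not> rp z e (i - 1) (j - 1))}"
  proof (rule card_inj_on_le)
    show "inj_on snd (SIGMA l:{ell..n}. lines z n e l)"
      by (auto simp: inj_on_def lines_def intro: is_line_length_unique)
    show "snd ` (SIGMA l:{ell..n}. lines z n e l)
        \<subseteq> {(i, j). i < n \<and> j < n \<and> (min i j = 0 \<or> \<not> rp z e (i - 1) (j - 1))}"
      by (auto simp: lines_def is_line_def)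
    show "finite {(i, j). i < n \<and> j < n \<and> (min i j = 0 \<or> \<not> rp z e (i - 1) (j - 1))}"
      by (rule finite_subset[of _ "{..<n} \<times> {..<n}"]) auto
  qed
  finally show ?thesis .
qed

section \<open>Recurrence quantities along a dense mutually recurrent set\<close>

definition mutually_recurrent :: "(nat \<Rightarrow> 'a) \<Rightarrow> real \<Rightarrow> nat \<Rightarrow> nat set \<Rightarrow> bool" where
  "mutually_recurrent z e ell G \<longleftrightarrow> (\<forall>p\<in>G. \<forall>r\<in>G. \<forall>k<ell. rp z e (p + k) (r + k))"

lemma mutually_recurrent_mono:
  "ell' \<le> ell \<Longrightarrow> mutually_recurrent z e ell G \<Longrightarrow> mutually_recurrent z e ell' G"
  by (simp add: mutually_recurrent_def)

lemma RR_eq: "RR z n e ell = real (\<Sum>l\<in>{ell..n}. l * card (lines z n e l)) / (real n ^ 2 - real n)"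
  by (simp add: RR_def lam_def num_lines_def lines_def sum_divide_distrib)

lemma Lam_eq: "Lam z n e ell = real (\<Sum>l\<in>{ell..n}. card (lines z n e l)) / (real n ^ 2 - real n)"
  by (simp add: Lam_def lam_def num_lines_def lines_def sum_divide_distrib)

lemma real_square_minus_eq: "real n ^ 2 - real n = real (n * n - n)"
  by (simp add: of_nat_diff power2_eq_square)

lemma RR_le_1: "RR z n e ell \<le> 1"
proof -
  have "real (\<Sum>l\<in>{ell..n}. l * card (lines z n e l)) \<le> real (n * n - n)"
    using sum_length_lines_le by (simp only: of_nat_le_iff)
  then show ?thesis
    unfolding RR_eq real_square_minus_eq by (cases "n * n - n = 0") simp_all
qed

lemma RR_le_mult_Lam: "RR z n e ell \<le> real n * Lam z n e ell"
proof -
  have "(\<Sum>l\<in>{ell..n}. l * card (lines z n e l)) \<le> (\<Sum>l\<in>{ell..n}. n * card (lines z n e l))"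
    by (intro sum_mono) simp
  then have "real (\<Sum>l\<in>{ell..n}. l * card (lines z n e l))
      \<le> real n * real (\<Sum>l\<in>{ell..n}. card (lines z n e l))"
    by (simp only: of_nat_le_iff sum_distrib_left flip: of_nat_mult)
  then show ?thesis
    unfolding RR_eq Lam_eq real_square_minus_eq times_divide_eq_right
    by (rule divide_right_mono) (rule of_nat_0_le_iff)
qed

lemma corr_sum_le_1: "corr_sum z n e ell \<le> 1"
proof -
  have "card {(i, j). i < n \<and> j < n \<and> (\<forall>k<ell. rho (shift (i + k) z) (shift (j + k) z) \<le> e)}
      \<le> card ({..<n} \<times> {..<n})"
    by (intro card_mono) auto
  then show ?thesis
    unfolding corr_sum_def
    by (cases "n = 0") (simp_all add: card_cartesian_product power2_eq_square flip: of_nat_mult)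
qed

lemma corr_sum_ge_density:
  assumes "mutually_recurrent z e ell G"
  shows "(real (card ({..<n} \<inter> G)) / real n) ^ 2 \<le> corr_sum z n e ell"
proof -
  let ?C = "{(i, j). i < n \<and> j < n \<and> (\<forall>k<ell. rho (shift (i + k) z) (shift (j + k) z) \<le> e)}"
  have "({..<n} \<inter> G) \<times> ({..<n} \<inter> G) \<subseteq> ?C"
    using assms by (auto simp: mutually_recurrent_def rp_def)
  then have "card (({..<n} \<inter> G) \<times> ({..<n} \<inter> G)) \<le> card ?C"
    by (intro card_mono) (auto intro: finite_subset[of _ "{..<n} \<times> {..<n}"])
  then have "real (card ({..<n} \<inter> G)) ^ 2 \<le> real (card ?C)"
    by (simp add: card_cartesian_product power2_eq_square flip: of_nat_mult)
  then show ?thesis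
    unfolding corr_sum_def by (simp add: power_divide divide_right_mono)
qed

lemma RR_ge_density:
  assumes "mutually_recurrent z e ell G" "0 < ell" "2 \<le> n"
  shows "(real (card ({..<n - ell} \<inter> G)) / real n) ^ 2 - 1 / real n \<le> RR z n e ell"
proof -
  define H where "H = {..<n - ell} \<inter> G"
  define T where "T = {(p, r). p \<noteq> r \<and> p + ell \<le> n \<and> r + ell \<le> n \<and> (\<forall>k<ell. rp z e (p + k) (r + k))}"
  have finite_H: "finite H"
    by (simp add: H_def)
  have "H \<times> H - (\<lambda>p. (p, p)) ` H \<subseteq> T"
    using assms(1) by (auto simp: H_def T_def mutually_recurrent_def)
  then have "card (H \<times> H - (\<lambda>p. (p, p)) ` H) \<le> card T"
    by (intro card_mono) (auto simp: T_def intro: finite_subset[of _ "{..n} \<times> {..n}"])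
  also have "card T \<le> (\<Sum>l\<in>{ell..n}. l * card (lines z n e l))"
    unfolding T_def by (rule card_recurrent_segments_le[OF assms(2)])
  finally have "card H * card H - card H \<le> (\<Sum>l\<in>{ell..n}. l * card (lines z n e l))"
    using finite_H by (subst (asm) card_Diff_subset) (auto simp: card_image inj_on_def card_cartesian_product)
  moreover have "card H \<le> n"
    using card_mono[of "{..<n}" H] unfolding H_def by force
  ultimately have "card H * card H \<le> (\<Sum>l\<in>{ell..n}. l * card (lines z n e l)) + n"
    by linarith
  then have "real (card H * card H) \<le> real ((\<Sum>l\<in>{ell..n}. l * card (lines z n e l)) + n)"
    by (simp only: of_nat_le_iff)
  then have "real (card H) ^ 2 - real n \<le> real (\<Sum>l\<in>{ell..n}. l * card (lines z n e l))"
    by (simp add: power2_eq_square)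
  have "(real (card H) / real n) ^ 2 - 1 / real n = (real (card H) ^ 2 - real n) / real n ^ 2"
    using assms(3) by (simp add: field_simps power2_eq_square)
  also have "\<dots> \<le> real (\<Sum>l\<in>{ell..n}. l * card (lines z n e l)) / real n ^ 2"
    using \<open>real (card H) ^ 2 - real n \<le> _\<close> by (rule divide_right_mono) simp
  also have "\<dots> \<le> real (\<Sum>l\<in>{ell..n}. l * card (lines z n e l)) / (real n ^ 2 - real n)"
    using assms(3) by (intro divide_left_mono mult_pos_pos of_nat_0_le_iff) (simp_all add: power2_eq_square)
  finally show ?thesis
    by (simp add: RR_eq H_def)
qed

text \<open>A line starts at \<open>(i, j)\<close> only if \<open>(i - 1, j - 1)\<close> is not recurrent, which forces \<open>i - 1\<close> or
  \<open>j - 1\<close> out of \<open>G\<close>.\<close>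

lemma card_line_starts_le:
  assumes "mutually_recurrent z e 1 G"
  shows "card {(i, j). i < n \<and> j < n \<and> (min i j = 0 \<or> \<not> rp z e (i - 1) (j - 1))}
    \<le> 2 * n * (1 + card ({..<n} \<inter> - G))"
proof -
  define B where "B = {..<n} \<inter> - G"
  let ?starts = "{(i, j). i < n \<and> j < n \<and> (min i j = 0 \<or> \<not> rp z e (i - 1) (j - 1))}"
  have pred_in_G: "x - 1 \<in> G" if "0 < x" "x < n" "x \<notin> Suc ` B" for x
  proof (rule ccontr)
    assume "x - 1 \<notin> G"
    with that(2) have "x - 1 \<in> B"
      by (simp add: B_def)
    then have "Suc (x - 1) \<in> Suc ` B"
      by (rule imageI)
    with that(1,3) show False
      by simp
  qed
  have "i = 0 \<or> j = 0 \<or> i \<in> Suc ` B \<or> j \<in> Suc ` B" if "(i, j) \<in> ?starts" for i j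
  proof (rule ccontr)
    assume "\<not> ?thesis"
    with that have "i - 1 \<in> G" "j - 1 \<in> G"
      using pred_in_G[of i] pred_in_G[of j] by auto
    with assms have "\<forall>k<1. rp z e (i - 1 + k) (j - 1 + k)"
      unfolding mutually_recurrent_def by blast
    with that \<open>\<not> ?thesis\<close> show False
      by (simp add: min_def split: if_splits)
  qed
  then have "?starts \<subseteq> ({0} \<times> {..<n} \<union> {..<n} \<times> {0}) \<union> (Suc ` B \<times> {..<n} \<union> {..<n} \<times> Suc ` B)"
    by blast
  then have "card ?starts \<le> card (({0} \<times> {..<n} \<union> {..<n} \<times> {0}) \<union> (Suc ` B \<times> {..<n} \<union> {..<n} \<times> Suc ` B))"
    by (intro card_mono) (auto simp: B_def)
  also have "\<dots> \<le> card ({0} \<times> {..<n} \<union> {..<n} \<times> {0}) + card (Suc ` B \<times> {..<n} \<union> {..<n} \<times> Suc ` B)"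
    by (rule card_Un_le)
  also have "\<dots> \<le> (n + n) + (card B * n + n * card B)"
  proof (rule add_mono)
    show "card ({0} \<times> {..<n} \<union> {..<n} \<times> {0}) \<le> n + n"
      by (rule order_trans[OF card_Un_le]) (simp add: card_cartesian_product)
    show "card (Suc ` B \<times> {..<n} \<union> {..<n} \<times> Suc ` B) \<le> card B * n + n * card B"
      by (rule order_trans[OF card_Un_le]) (simp add: card_cartesian_product card_image)
  qed
  finally show ?thesis
    by (simp add: B_def algebra_simps)
qed

lemma Lam_le_density:
  assumes "mutually_recurrent z e 1 G" "2 \<le> n"
  shows "Lam z n e ell \<le> 4 * (1 + real (card ({..<n} \<inter> - G))) / real n"
proof -
  let ?b = "real (card ({..<n} \<inter> - G))"
  have "(\<Sum>l\<in>{ell..n}. card (lines z n e l)) \<le> 2 * n * (1 + card ({..<n} \<inter> - G))"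
    using sum_card_lines_le card_line_starts_le[OF assms(1)] order_trans by blast
  then have "real (\<Sum>l\<in>{ell..n}. card (lines z n e l)) \<le> real (2 * n * (1 + card ({..<n} \<inter> - G)))"
    by (simp only: of_nat_le_iff)
  then have "real (\<Sum>l\<in>{ell..n}. card (lines z n e l)) \<le> 2 * real n * (1 + ?b)"
    by (simp only: of_nat_mult of_nat_add of_nat_1 of_nat_numeral)
  then have "Lam z n e ell \<le> 2 * real n * (1 + ?b) / (real n ^ 2 - real n)"
    using assms(2) unfolding Lam_eq by (intro divide_right_mono) (simp_all add: power2_eq_square)
  also have "\<dots> = 2 * (1 + ?b) / (real n - 1)"
    using assms(2) by (simp add: power2_eq_square field_simps)
  also have "\<dots> \<le> 4 * (1 + ?b) / real n"
  proof -
    have "2 * real n * (1 + ?b) \<le> 4 * (real n - 1) * (1 + ?b)"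
      using assms(2) by (intro mult_right_mono) simp_all
    then show ?thesis
      using assms(2) by (simp add: field_simps)
  qed
  finally show ?thesis .
qed

lemma corr_sum_tendsto_1:
  assumes "mutually_recurrent z e ell G" "zero_density (- G)"
  shows "(\<lambda>n. corr_sum z n e ell) \<longlonglongrightarrow> 1"
proof (rule tendsto_sandwich)
  show "\<forall>\<^sub>F n in sequentially. (real (card ({..<n} \<inter> G)) / real n) ^ 2 \<le> corr_sum z n e ell"
    using corr_sum_ge_density[OF assms(1)] by simp
  show "\<forall>\<^sub>F n in sequentially. corr_sum z n e ell \<le> 1"
    by (simp add: corr_sum_le_1)
  show "(\<lambda>n. (real (card ({..<n} \<inter> G)) / real n) ^ 2) \<longlonglongrightarrow> 1"
    using tendsto_power[OF density_tendsto_1_if_zero_density_Compl[OF assms(2), of 0], of 2] by simp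
qed simp

lemma RR_tendsto_1:
  assumes "mutually_recurrent z e ell G" "0 < ell" "zero_density (- G)"
  shows "(\<lambda>n. RR z n e ell) \<longlonglongrightarrow> 1"
proof (rule tendsto_sandwich)
  let ?lower = "\<lambda>n. (real (card ({..<n - ell} \<inter> G)) / real n) ^ 2 - 1 / real n"
  show "\<forall>\<^sub>F n in sequentially. ?lower n \<le> RR z n e ell"
    using eventually_ge_at_top[of 2] by eventually_elim (rule RR_ge_density[OF assms(1,2)])
  show "\<forall>\<^sub>F n in sequentially. RR z n e ell \<le> 1"
    by (simp add: RR_le_1)
  show "?lower \<longlonglongrightarrow> 1"
    using tendsto_diff[OF tendsto_power[OF density_tendsto_1_if_zero_density_Compl[OF assms(3)]]
        lim_const_over_n[of 1]] by simp
qed simp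

lemma DET_tendsto_1:
  assumes "mutually_recurrent z e ell G" "0 < ell" "zero_density (- G)"
  shows "(\<lambda>n. DET z n e ell) \<longlonglongrightarrow> 1"
proof -
  have "mutually_recurrent z e 1 G"
    using mutually_recurrent_mono[of 1 ell] assms(1,2) by simp
  then have "(\<lambda>n. RR z n e 1) \<longlonglongrightarrow> 1"
    using RR_tendsto_1 assms(3) zero_less_one by blast
  with RR_tendsto_1[OF assms] show ?thesis
    unfolding DET_def using tendsto_divide by fastforce
qed

lemma avgL_tendsto_infinity:
  assumes "mutually_recurrent z e ell G" "0 < ell" "zero_density (- G)"
  shows "filterlim (\<lambda>n. avgL z n e ell) at_top sequentially"
proof -
  define U where "U n = 4 * (1 + real (card ({..<n} \<inter> - G))) / real n" for n
  have one: "mutually_recurrent z e 1 G"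
    using mutually_recurrent_mono[of 1 ell] assms(1,2) by simp
  have "U = (\<lambda>n. 4 / real n + 4 * (real (card ({..<n} \<inter> - G)) / real n))"
    by (simp add: U_def fun_eq_iff add_divide_distrib)
  then have "U \<longlonglongrightarrow> 0"
    using tendsto_add[OF lim_const_over_n[of 4] tendsto_mult[OF tendsto_const[of 4] assms(3)[unfolded zero_density_def]]]
    by simp
  moreover have "\<forall>\<^sub>F n in sequentially. 0 < U n"
    using eventually_gt_at_top[of 0] by eventually_elim (simp add: U_def)
  ultimately have "filterlim (\<lambda>n. inverse (2 * U n)) at_top sequentially"
    by (intro filterlim_inverse_at_top tendsto_mult_right_zero) (simp_all add: eventually_mono)
  moreover have "\<forall>\<^sub>F n in sequentially. 1 / 2 < RR z n e ell"
    by (rule order_tendstoD(1)[OF RR_tendsto_1[OF assms]]) simp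
  then have "\<forall>\<^sub>F n in sequentially. inverse (2 * U n) \<le> avgL z n e ell"
    using eventually_ge_at_top[of 2]
  proof eventually_elim
    case (elim n)
    have Lam_le: "Lam z n e ell \<le> U n"
      unfolding U_def by (rule Lam_le_density[OF one elim(2)])
    have "0 < Lam z n e ell"
    proof (rule ccontr)
      assume "\<not> 0 < Lam z n e ell"
      then have "real n * Lam z n e ell \<le> 0"
        by (simp add: mult_nonneg_nonpos)
      with RR_le_mult_Lam[of z n e ell] elim(1) show False
        by linarith
    qed
    then have "inverse (2 * U n) \<le> (1 / 2) / Lam z n e ell"
      using Lam_le by (simp add: divide_simps)
    also have "\<dots> \<le> avgL z n e ell"
      unfolding avgL_def using \<open>0 < Lam z n e ell\<close> elim(1) by (intro divide_right_mono) simp_all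
    finally show ?case .
  qed
  ultimately show ?thesis
    by (rule filterlim_at_top_mono)
qed

section \<open>Constant blocks in the delay embedding\<close>

lemma rho_le_half_power:
  assumes "\<forall>t<N. u t = v t"
  shows "rho u v \<le> (1 / 2) ^ N"
proof (cases "u = v")
  case False
  then obtain i where "u i \<noteq> v i"
    by auto
  then have first: "u (LEAST i. u i \<noteq> v i) \<noteq> v (LEAST i. u i \<noteq> v i)"
    by (rule LeastI)
  have "N \<le> (LEAST i. u i \<noteq> v i)"
  proof (rule ccontr)
    assume "\<not> N \<le> (LEAST i. u i \<noteq> v i)"
    with assms first show False
      by simp
  qed
  with False show ?thesis
    by (simp add: rho_def power_decreasing)
qed (simp add: rho_def)

lemma rp_embed_if_windows_agree:
  assumes "\<forall>t<N + m. y (p + t) = y (r + t)" "(1 / 2) ^ N \<le> e"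
  shows "rp (embed m y) e p r"
proof -
  have "\<forall>t<N. shift p (embed m y) t = shift r (embed m y) t"
    using assms(1) by (simp add: shift_def embed_def add.assoc)
  then show ?thesis
    unfolding rp_def using rho_le_half_power assms(2) order_trans by blast
qed

lemma mutually_recurrent_constant_windows:
  assumes "(1 / 2) ^ N \<le> e"
  shows "mutually_recurrent (embed m y) e ell {i. \<forall>k<ell + N + m. y (i + k) = c}"
  unfolding mutually_recurrent_def
proof (intro ballI allI impI)
  fix p r k
  assume "p \<in> {i. \<forall>k<ell + N + m. y (i + k) = c}" "r \<in> {i. \<forall>k<ell + N + m. y (i + k) = c}" "k < ell"
  then have "\<forall>t<N + m. y (p + k + t) = y (r + k + t)"
    by (simp add: add.assoc)
  then show "rp (embed m y) e (p + k) (r + k)"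
    using rp_embed_if_windows_agree assms by blast
qed

lemma zero_density_non_constant_windows:
  assumes "zero_density {i. y i \<noteq> c}"
  shows "zero_density (- {i. \<forall>k<W. y (i + k) = c})"
proof -
  have "- {i. \<forall>k<W. y (i + k) = c} = (\<Union>k\<in>{..<W}. {i. i + k \<in> {i. y i \<noteq> c}})"
    by auto
  then show ?thesis
    using zero_density_UN[of "{..<W}"] zero_density_shift[OF assms] by simp
qed

section \<open>Non-primitive uniform binary substitutions\<close>

lemma length_subst_word:
  "(\<And>x. length (\<zeta> x) = q) \<Longrightarrow> length (subst_word \<zeta> w) = q * length w"
  unfolding subst_word_def by (induction w) auto

lemma length_subst_word_iterate:
  "(\<And>x. length (\<zeta> x) = q) \<Longrightarrow> length ((subst_word \<zeta> ^^ k) w) = q ^ k * length w"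
  by (induction k) (simp_all add: length_subst_word)

lemma set_subst_word: "set (subst_word \<zeta> w) = (\<Union>x\<in>set w. set (\<zeta> x))"
  by (simp add: subst_word_def)

lemma nth_subst_word:
  assumes "\<And>x. length (\<zeta> x) = q" "p < q * length w"
  shows "subst_word \<zeta> w ! p = \<zeta> (w ! (p div q)) ! (p mod q)"
  using assms(2)
proof (induction w arbitrary: p)
  case (Cons x w)
  show ?case
  proof (cases "p < q")
    case True
    then show ?thesis
      using assms(1) by (simp add: subst_word_def nth_append)
  next
    case False
    then have "0 < q"
      using Cons.prems by (cases q) simp_all
    have "subst_word \<zeta> (x # w) ! p = subst_word \<zeta> w ! (p - q)"
      using assms(1) False by (simp add: subst_word_def nth_append)
    also have "\<dots> = \<zeta> (w ! ((p - q) div q)) ! ((p - q) mod q)"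
      using Cons False by simp
    also have "\<dots> = \<zeta> ((x # w) ! (p div q)) ! (p mod q)"
      using False \<open>0 < q\<close> by (simp add: le_div_geq le_mod_geq)
    finally show ?thesis .
  qed
qed simp

lemma subst_shift_prefix_factor:
  assumes "y \<in> subst_shift \<zeta>"
  obtains a k s where "s + n \<le> length ((subst_word \<zeta> ^^ k) [a])"
    "\<And>i. i < n \<Longrightarrow> y i = (subst_word \<zeta> ^^ k) [a] ! (s + i)"
proof -
  have "map y [0..<n] \<in> subst_lang \<zeta>"
    using assms by (simp add: subst_shift_def)
  then obtain a k u v where "(subst_word \<zeta> ^^ k) [a] = u @ map y [0..<n] @ v"
    by (auto simp: subst_lang_def is_factor_def)
  then show thesis
    by (intro that[where a = a and k = k and s = "length u"]) (simp_all add: nth_append)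
qed

lemma primitive_if_common_letter:
  assumes "\<And>a. b \<in> set (\<zeta> a)" "\<And>a. a \<in> set (\<zeta> b)"
  shows "primitive \<zeta>"
proof -
  have "a' \<in> set ((subst_word \<zeta> ^^ 2) [a])" for a a'
    using assms by (auto simp: numeral_2_eq_2 set_subst_word)
  then show ?thesis
    unfolding primitive_def by (intro exI[of _ 2]) simp
qed

lemma subset_Not_if_notin: "(a::bool) \<notin> S \<Longrightarrow> S \<subseteq> {\<not> a}"
  by (cases a) (auto intro: ccontr)

lemma not_primitive_cases:
  assumes "\<not> primitive \<zeta>"
  obtains "\<And>b. \<exists>b'. set (\<zeta> b) \<subseteq> {b'}"
  | c where "set (\<zeta> c) \<subseteq> {c}" "c \<in> set (\<zeta> (\<not> c))"
proof (cases "\<forall>b. \<exists>b'. set (\<zeta> b) \<subseteq> {b'}")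
  case False
  then obtain b where "\<forall>b'. \<not> set (\<zeta> b) \<subseteq> {b'}"
    by blast
  then have all_in_b: "a \<in> set (\<zeta> b)" for a
  proof (rule contrapos_pp)
    assume "a \<notin> set (\<zeta> b)"
    then have "set (\<zeta> b) \<subseteq> {\<not> a}"
      by (rule subset_Not_if_notin)
    then show "\<not> (\<forall>b'. \<not> set (\<zeta> b) \<subseteq> {b'})"
      by blast
  qed
  show thesis
  proof (cases "b \<in> set (\<zeta> (\<not> b))")
    case True
    have "b \<in> set (\<zeta> a)" for a
    proof (cases "a = b")
      case False
      then have "a = (\<not> b)"
        by blast
      with \<open>b \<in> set (\<zeta> (\<not> b))\<close> show ?thesis
        by simp
    qed (simp add: all_in_b)
    then show thesis
      using primitive_if_common_letter[of b \<zeta>] all_in_b assms by blast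
  next
    case False
    then have "set (\<zeta> (\<not> b)) \<subseteq> {\<not> b}"
      by (rule subset_Not_if_notin)
    then show thesis
      using that(2)[of "\<not> b"] all_in_b by simp
  qed
qed (use that(1) in blast)

lemma subst_word_iterate_constant:
  assumes "\<And>b. \<exists>b'. set (\<zeta> b) \<subseteq> {b'}"
  shows "\<exists>b. set ((subst_word \<zeta> ^^ k) [a]) \<subseteq> {b}"
proof (induction k)
  case (Suc k)
  then obtain b where b: "set ((subst_word \<zeta> ^^ k) [a]) \<subseteq> {b}"
    by blast
  obtain b' where "set (\<zeta> b) \<subseteq> {b'}"
    using assms by blast
  moreover have "set ((subst_word \<zeta> ^^ Suc k) [a]) \<subseteq> set (\<zeta> b)"
    using b by (auto simp: set_subst_word)
  ultimately show ?case
    by blast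
qed simp

lemma subst_shift_constant:
  assumes "\<And>b. \<exists>b'. set (\<zeta> b) \<subseteq> {b'}" "y \<in> subst_shift \<zeta>"
  shows "y i = y 0"
proof -
  obtain a k s where len: "s + Suc i \<le> length ((subst_word \<zeta> ^^ k) [a])"
    and y: "\<And>i'. i' < Suc i \<Longrightarrow> y i' = (subst_word \<zeta> ^^ k) [a] ! (s + i')"
    using subst_shift_prefix_factor[OF assms(2), where n = "Suc i"] by metis
  obtain b where b: "set ((subst_word \<zeta> ^^ k) [a]) \<subseteq> {b}"
    using subst_word_iterate_constant[where \<zeta> = \<zeta>, OF assms(1)] by blast
  have "y i' \<in> set ((subst_word \<zeta> ^^ k) [a])" if "i' \<le> i" for i'
    using y[of i'] len that by (simp add: less_Suc_eq_le)
  with b have "y i = b" "y 0 = b"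
    by blast+
  then show ?thesis
    by simp
qed

definition digits_in :: "nat \<Rightarrow> nat set \<Rightarrow> nat \<Rightarrow> nat set" where
  "digits_in q D k = {x. x < q ^ k \<and> (\<forall>t<k. x div q ^ t mod q \<in> D)}"

lemma digits_in_0: "digits_in q D 0 = {0}"
  by (auto simp: digits_in_def)

lemma digits_in_Suc_iff:
  assumes "0 < q"
  shows "x \<in> digits_in q D (Suc k) \<longleftrightarrow> x mod q \<in> D \<and> x div q \<in> digits_in q D k"
  using assms by (auto simp: digits_in_def All_less_Suc2 div_mult2_eq div_less_iff_less_mult mult.commute)

lemma digits_in_mod:
  assumes "0 < q" "x \<in> digits_in q D k" "j \<le> k"
  shows "x mod q ^ j \<in> digits_in q D j"
  using assms(2,3)
proof (induction j arbitrary: x k)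
  case (Suc j)
  then obtain k' where k: "k = Suc k'" "j \<le> k'"
    by (cases k) auto
  with Suc.prems assms(1) have "x mod q \<in> D" "x div q \<in> digits_in q D k'"
    by (simp_all add: digits_in_Suc_iff)
  moreover have "x mod q ^ Suc j = q * (x div q mod q ^ j) + x mod q"
    by (simp add: mod_mult2_eq)
  ultimately show ?case
    using Suc.IH[of "x div q" k'] k(2) assms(1) by (simp add: digits_in_Suc_iff)
qed (simp add: digits_in_0)

lemma card_digits_in_le:
  assumes "0 < q" "finite D"
  shows "card (digits_in q D k) \<le> card D ^ k"
proof (induction k)
  case 0
  then show ?case
    by (simp add: digits_in_0)
next
  case (Suc k)
  have "digits_in q D (Suc k) \<subseteq> (\<lambda>(u, d). u * q + d) ` (digits_in q D k \<times> D)"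
  proof
    fix x
    assume "x \<in> digits_in q D (Suc k)"
    then have "(x div q, x mod q) \<in> digits_in q D k \<times> D"
      using assms(1) by (simp add: digits_in_Suc_iff)
    then show "x \<in> (\<lambda>(u, d). u * q + d) ` (digits_in q D k \<times> D)"
      by (rule rev_image_eqI) simp
  qed
  then have "card (digits_in q D (Suc k)) \<le> card (digits_in q D k \<times> D)"
    using assms(2) by (intro surj_card_le) (auto simp: digits_in_def)
  also have "\<dots> \<le> card D ^ k * card D"
    using Suc.IH by (simp add: card_cartesian_product)
  finally show ?case
    by (simp add: mult.commute)
qed

lemma nth_subst_word_iterate_in_digits:
  assumes len: "\<And>x. length (\<zeta> x) = q" and fixed: "set (\<zeta> c) \<subseteq> {c}"
  shows "p < q ^ k \<Longrightarrow> (subst_word \<zeta> ^^ k) [a] ! p \<noteq> c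
    \<Longrightarrow> p \<in> digits_in q {d. d < q \<and> \<zeta> (\<not> c) ! d \<noteq> c} k"
proof (induction k arbitrary: p)
  case 0
  then show ?case
    by (simp add: digits_in_0)
next
  case (Suc k)
  define w where "w = (subst_word \<zeta> ^^ k) [a]"
  have "0 < q"
    using Suc.prems(1) by (cases q) simp_all
  have length_w: "length w = q ^ k"
    using length_subst_word_iterate[OF len] by (simp add: w_def)
  have p_div: "p div q < q ^ k"
    using Suc.prems(1) \<open>0 < q\<close> by (simp add: div_less_iff_less_mult mult.commute)
  have nth_eq: "(subst_word \<zeta> ^^ Suc k) [a] ! p = \<zeta> (w ! (p div q)) ! (p mod q)"
    using nth_subst_word[OF len, of p w] Suc.prems(1) length_w by (simp add: w_def mult.commute)
  have "w ! (p div q) \<noteq> c"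
  proof
    assume "w ! (p div q) = c"
    then have "(subst_word \<zeta> ^^ Suc k) [a] ! p \<in> set (\<zeta> c)"
      using nth_eq len \<open>0 < q\<close> by simp
    with fixed Suc.prems(2) show False
      by blast
  qed
  then have "w ! (p div q) = (\<not> c)"
    by blast
  then have "p mod q \<in> {d. d < q \<and> \<zeta> (\<not> c) ! d \<noteq> c}"
    using nth_eq Suc.prems(2) \<open>0 < q\<close> by simp
  moreover have "p div q \<in> digits_in q {d. d < q \<and> \<zeta> (\<not> c) ! d \<noteq> c} k"
    using Suc.IH[OF p_div] \<open>w ! (p div q) \<noteq> c\<close> by (simp add: w_def)
  ultimately show ?case
    using \<open>0 < q\<close> by (simp add: digits_in_Suc_iff)
qed

lemma card_interval_mod_in_le:
  assumes "0 < Q" "finite A"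
  shows "card {i. i < n \<and> (s + i) mod Q \<in> A} \<le> (n div Q + 2) * card A"
proof -
  let ?f = "\<lambda>i. ((s + i) div Q, (s + i) mod Q)"
  have "inj_on ?f {i. i < n \<and> (s + i) mod Q \<in> A}"
    by (rule inj_onI) (metis (no_types, lifting) div_mult_mod_eq prod.inject add_left_cancel)
  moreover have "?f ` {i. i < n \<and> (s + i) mod Q \<in> A} \<subseteq> {s div Q .. (s + n) div Q} \<times> A"
    by (auto simp: div_le_mono)
  ultimately have "card {i. i < n \<and> (s + i) mod Q \<in> A} \<le> card ({s div Q .. (s + n) div Q} \<times> A)"
    using assms(2) by (intro card_inj_on_le) auto
  also have "\<dots> \<le> (n div Q + 2) * card A"
  proof -
    have "s mod Q + n mod Q < 2 * Q"
      using assms(1) by (simp add: add_strict_mono mult_2)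
    then have "(s mod Q + n mod Q) div Q \<le> 1"
      using assms(1) by (simp add: div_less_iff_less_mult less_Suc_eq_le[symmetric])
    then have "(s + n) div Q \<le> s div Q + n div Q + 1"
      using div_add1_eq[of s n Q] by linarith
    then have "card {s div Q .. (s + n) div Q} \<le> n div Q + 2"
      by simp
    then show ?thesis
      unfolding card_cartesian_product by (rule mult_right_mono) simp
  qed
  finally show ?thesis .
qed

lemma card_non_fixed_letter_le:
  assumes len: "\<And>x. length (\<zeta> x) = q" and "2 \<le> q" and fixed: "set (\<zeta> c) \<subseteq> {c}"
    and y: "y \<in> subst_shift \<zeta>" and "q ^ j \<le> n"
  shows "card ({..<n} \<inter> {i. y i \<noteq> c}) \<le> (n div q ^ j + 2) * card {d. d < q \<and> \<zeta> (\<not> c) ! d \<noteq> c} ^ j"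
proof -
  define D where "D = {d. d < q \<and> \<zeta> (\<not> c) ! d \<noteq> c}"
  obtain a k s where window: "s + n \<le> length ((subst_word \<zeta> ^^ k) [a])"
    and y_eq: "\<And>i. i < n \<Longrightarrow> y i = (subst_word \<zeta> ^^ k) [a] ! (s + i)"
    using subst_shift_prefix_factor[OF y, where n = n] by metis
  have length_eq: "length ((subst_word \<zeta> ^^ k) [a]) = q ^ k"
    using length_subst_word_iterate[OF len] by simp
  then have "q ^ j \<le> q ^ k"
    using window \<open>q ^ j \<le> n\<close> by linarith
  then have "j \<le> k"
    using \<open>2 \<le> q\<close> by simp
  have "{..<n} \<inter> {i. y i \<noteq> c} \<subseteq> {i. i < n \<and> (s + i) mod q ^ j \<in> digits_in q D j}"
  proof clarify
    fix i
    assume "i < n" "y i \<noteq> c"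
    then have "s + i \<in> digits_in q D k"
      using nth_subst_word_iterate_in_digits[where \<zeta> = \<zeta>, OF len fixed, of "s + i" k a]
        window length_eq y_eq
      by (simp add: D_def)
    then show "(s + i) mod q ^ j \<in> digits_in q D j"
      using digits_in_mod \<open>j \<le> k\<close> \<open>2 \<le> q\<close> by simp
  qed
  then have "card ({..<n} \<inter> {i. y i \<noteq> c}) \<le> card {i. i < n \<and> (s + i) mod q ^ j \<in> digits_in q D j}"
    by (intro card_mono) auto
  also have "\<dots> \<le> (n div q ^ j + 2) * card (digits_in q D j)"
    using \<open>2 \<le> q\<close> by (intro card_interval_mod_in_le) (simp_all add: digits_in_def)
  also have "\<dots> \<le> (n div q ^ j + 2) * card D ^ j"
    using \<open>2 \<le> q\<close> by (intro mult_left_mono card_digits_in_le) (simp_all add: D_def)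
  finally show ?thesis
    by (simp add: D_def)
qed

lemma zero_density_non_fixed_letter:
  assumes len: "\<And>x. length (\<zeta> x) = q" and "2 \<le> q" and fixed: "set (\<zeta> c) \<subseteq> {c}"
    and "c \<in> set (\<zeta> (\<not> c))" and y: "y \<in> subst_shift \<zeta>"
  shows "zero_density {i. y i \<noteq> c}"
proof (rule zero_density_if_block_bound)
  let ?D = "{d. d < q \<and> \<zeta> (\<not> c) ! d \<noteq> c}"
  obtain d where "d < q" "\<zeta> (\<not> c) ! d = c"
    using \<open>c \<in> set (\<zeta> (\<not> c))\<close> len by (metis in_set_conv_nth)
  then have "?D \<subset> {..<q}"
    by auto
  then show "card ?D < q"
    using psubset_card_mono[of "{..<q}" ?D] by simp
  show "card ({..<n} \<inter> {i. y i \<noteq> c}) \<le> (n div q ^ j + 2) * card ?D ^ j" if "q ^ j \<le> n" for j n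
    using card_non_fixed_letter_le[where \<zeta> = \<zeta>, OF len \<open>2 \<le> q\<close> fixed y that] .
qed

lemma subst_shift_zero_density:
  assumes "\<And>x. length (\<zeta> x) = q" "2 \<le> q" "\<not> primitive \<zeta>" "y \<in> subst_shift \<zeta>"
  obtains c where "zero_density {i. y i \<noteq> c}"
  using assms(3)
proof (cases rule: not_primitive_cases)
  case 1
  then have "{i. y i \<noteq> y 0} = {}"
    using subst_shift_constant assms(4) by blast
  then show thesis
    using that zero_density_empty by metis
next
  case (2 c)
  then show thesis
    using that zero_density_non_fixed_letter[where \<zeta> = \<zeta>, OF assms(1,2) _ _ assms(4)] by blast
qed

theorem theorem1p2:
  fixes \<zeta> :: "bool \<Rightarrow> bool list" and q :: nat and y :: "nat \<Rightarrow> bool"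
    and m ell :: nat and \<epsilon> :: real
  assumes "q \<ge> 2" and "length (\<zeta> False) = q" and "length (\<zeta> True) = q"
    and "\<not> primitive \<zeta>"
    and "y \<in> subst_shift \<zeta>"
    and "m \<ge> 1" and "ell \<ge> 1" and "\<epsilon> > 0"
  shows "(\<lambda>n. corr_sum (embed m y) n \<epsilon> ell) \<longlonglongrightarrow> 1
    \<and> (\<lambda>n. RR (embed m y) n \<epsilon> ell) \<longlonglongrightarrow> 1
    \<and> (\<lambda>n. DET (embed m y) n \<epsilon> ell) \<longlonglongrightarrow> 1
    \<and> filterlim (\<lambda>n. avgL (embed m y) n \<epsilon> ell) at_top sequentially"
proof -
  have len: "length (\<zeta> x) = q" for x
    using assms(2,3) by (cases x) simp_all
  obtain c where c: "zero_density {i. y i \<noteq> c}"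
    using subst_shift_zero_density[OF len assms(1,4,5)] by blast
  obtain N where "(1 / 2) ^ N < \<epsilon>"
    using real_arch_pow_inv[of \<epsilon> "1 / 2"] assms(8) by auto
  define G where "G = {i. \<forall>k<ell + N + m. y (i + k) = c}"
  have recurrent: "mutually_recurrent (embed m y) \<epsilon> ell G"
    unfolding G_def using \<open>(1 / 2) ^ N < \<epsilon>\<close> by (intro mutually_recurrent_constant_windows) simp
  have sparse: "zero_density (- G)"
    unfolding G_def by (rule zero_density_non_constant_windows[OF c])
  have "0 < ell"
    using assms(7) by simp
  show ?thesis
    using corr_sum_tendsto_1[OF recurrent sparse] RR_tendsto_1[OF recurrent \<open>0 < ell\<close> sparse]
      DET_tendsto_1[OF recurrent \<open>0 < ell\<close> sparse] avgL_tendsto_infinity[OF recurrent \<open>0 < ell\<close> sparse]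
    by blast
qed

end
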